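(* In the setting below, for any parameters $\epsilon_1,\epsilon_2,\epsilon_3>0$, $0<\theta_l<\theta_u$, $\rho^0>0$, $\sigma>1$ and $y^0\in\Upsilon_\tau$, the termination condition in step (ii) of Algorithm PDC is satisfied after finitely many iterations.
   Context: Setting. $\mathcal A$ is a finite set of links; $\mathcal V=\{\Delta h: h\ge0,\ \Lambda h=d\}\subset\mathbb R^{|\mathcal A|}$, where $\Delta$ is a 0/1 link–route incidence matrix, $\Lambda$ a 0/1 OD–route incidence matrix in which every route belongs to exactly one OD pair and every OD pair has at least one route, and $d>0$ (so $\mathcal V$ is a nonempty compact convex polytope in $\mathbb R^{|\mathcal A|}_{\ge0}$). Let $u_a\ge0$, $\mathcal Y=\{y: 0\le y_a\le u_a\ \forall a\}$, $1\le\tau\le|\mathcal A|$, $\Upsilon_\tau=\{y\in\mathcal Y: |\{a: y_a>0\}|\le\tau\}$. Standing assumptions: each $t_a(y_a,v_a)$ is continuously differentiable and strictly increasing in $v_a$ for $y_a\ge0$; each $G_a$ is nonnegative, continuously differentiable, strictly increasing, convex; $\int_0^{v_a}t_a(y_a,w)dw$ and $t_a(y_a,v_a)v_a$ are convex in $(y_a,v_a)$. With $\eta>0$: $F(y,v)=\sum_a t_a(y_a,v_a)v_a+\eta\sum_aG_a(y_a)$, $f(y,v)=\sum_a\int_0^{v_a}t_a(y_a,w)dw$, $g(y)=\min_{v\in\mathcal V}f(y,v)$, $\varphi(y,v)=f(y,v)-g(y)$. $\mathcal V^*(y)$ is the set of $v\in\mathcal V$ with $\langle t(y,v),v'-v\rangle\ge0$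 for all $v'\in\mathcal V$; it is a singleton equal to $\arg\min_{v\in\mathcal V}f(y,v)$. Known fact: $g$ is convex and continuously differentiable on $\mathcal Y$. Define $\Phi(y,v;\bar y,\bar v)=f(y,v)-g(\bar y)-\nabla g(\bar y)^{\mathsf T}(y-\bar y)$ and, for given $\rho^k,\beta^k>0$ and $(y^k,v^k)$, $\Psi^k(y,v)=F(y,v)+\rho^k\Phi(y,v;y^k,v^k)+\rho^k\beta^k\|(y-y^k,v-v^k)\|_2^2$. Algorithm AMA with inputs $(\rho^k,\beta^k,y^k,v^k;y^{k,0})$: for $j=0,1,\dots$: $v^{k,j+1}$ = unique minimizer of $\Psi^k(y^{k,j},\cdot)$ over $\mathcal V$; $y^{k,j+1}$ = a minimizer of $\Psi^k(\cdot,v^{k,j+1})$ over $\Upsilon_\tau$; stop if $(y^{k,j+1},v^{k,j+1})$ is partially optimal (i.e. $\Psi^k(y^{k,j+1},v^{k,j+1})\le\Psi^k(y^{k,j+1},v)\ \forall v\in\mathcal V$ and $\le\Psi^k(y,v^{k,j+1})\ \forall y\in\Upsilon_\tau$). $\mathrm{AMA}(\cdot)$ denotes the returned point if it stops, otherwise any accumulation point of its iterates. Algorithm PDC with parameters $\epsilon_1,\epsilon_2,\epsilon_3>0$, $0<\theta_l<\theta_u$, $\rho^0>0$, $\sigma>1$, $y^0\in\Upsilon_\tau$: set $v^0\in\mathcal V^*(y^0)$ and choose $\beta^0\in[\theta_l/\rho^0,\theta_u/\rho^0]$; for $k=0,1,\dots$: (i) $(y^{k+1},v^{k+1})=\mathrm{AMA}(\rho^k,\beta^k,y^k,v^k;y^k)$;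 (ii) if $\|y^{k+1}-y^k\|_2\le\epsilon_1$, $\|v^{k+1}-v^k\|_2\le\epsilon_2$ and $\Phi(y^{k+1},v^{k+1};y^k,v^k)\le\epsilon_3$, stop and return $(y^{k+1},v^{k+1})$; (iii) set $\rho^{k+1}=\sigma\rho^k$ if $\Phi(y^{k+1},v^{k+1};y^k,v^k)>\epsilon_3$, else $\rho^{k+1}=\rho^k$; (iv) choose $\beta^{k+1}\in[\theta_l/\rho^{k+1},\theta_u/\rho^{k+1}]$. *)

theory Defs
  imports "HOL-Analysis.Analysis"
begin

definition C1_on :: "'b::real_normed_vector set \<Rightarrow> ('b \<Rightarrow> real) \<Rightarrow> bool" where
  "C1_on S f \<longleftrightarrow> (\<exists>f'. (\<forall>x\<in>S. (f has_derivative blinfun_apply (f' x)) (at x within S))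
                       \<and> continuous_on S f')"

definition Vset :: "real^'r^'a \<Rightarrow> real^'r^'w \<Rightarrow> real^'w \<Rightarrow> (real^'a) set" where
  "Vset Delta Lambda d = {Delta *v h | h. (\<forall>r. 0 \<le> h $ r) \<and> Lambda *v h = d}"

definition Yset :: "real^'a \<Rightarrow> (real^'a) set" where
  "Yset u = {y. \<forall>a. 0 \<le> y $ a \<and> y $ a \<le> u $ a}"

definition Upsilon :: "real^'a \<Rightarrow> nat \<Rightarrow> (real^'a) set" where
  "Upsilon u \<tau> = {y \<in> Yset u. card {a. y $ a > 0} \<le> \<tau>}"

definition tvec :: "('a::finite \<Rightarrow> real \<Rightarrow> real \<Rightarrow> real) \<Rightarrow> real^'a \<Rightarrow> real^'a \<Rightarrow> real^'a" where
  "tvec t y v = (\<chi> a. t a (y $ a) (v $ a))"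

definition FF :: "('a::finite \<Rightarrow> real \<Rightarrow> real \<Rightarrow> real) \<Rightarrow> ('a \<Rightarrow> real \<Rightarrow> real) \<Rightarrow> real
    \<Rightarrow> real^'a \<Rightarrow> real^'a \<Rightarrow> real" where
  "FF t G \<eta> y v = (\<Sum>a\<in>UNIV. t a (y $ a) (v $ a) * v $ a) + \<eta> * (\<Sum>a\<in>UNIV. G a (y $ a))"

definition ff :: "('a::finite \<Rightarrow> real \<Rightarrow> real \<Rightarrow> real) \<Rightarrow> real^'a \<Rightarrow> real^'a \<Rightarrow> real" where
  "ff t y v = (\<Sum>a\<in>UNIV. integral {0..v $ a} (\<lambda>w. t a (y $ a) w))"

definition gg :: "('a::finite \<Rightarrow> real \<Rightarrow> real \<Rightarrow> real) \<Rightarrow> (real^'a) set \<Rightarrow> real^'a \<Rightarrow> real" where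
  "gg t V y = (INF v\<in>V. ff t y v)"

definition Vstar :: "('a::finite \<Rightarrow> real \<Rightarrow> real \<Rightarrow> real) \<Rightarrow> (real^'a) set \<Rightarrow> real^'a \<Rightarrow> (real^'a) set" where
  "Vstar t V y = {v \<in> V. \<forall>v'\<in>V. tvec t y v \<bullet> (v' - v) \<ge> 0}"

definition Phi :: "('a::finite \<Rightarrow> real \<Rightarrow> real \<Rightarrow> real) \<Rightarrow> (real^'a) set \<Rightarrow> (real^'a \<Rightarrow> real^'a)
    \<Rightarrow> real^'a \<Rightarrow> real^'a \<Rightarrow> real^'a \<Rightarrow> real^'a \<Rightarrow> real" where
  "Phi t V dg y v yb vb = ff t y v - gg t V yb - dg yb \<bullet> (y - yb)"

definition Psi :: "('a::finite \<Rightarrow> real \<Rightarrow> real \<Rightarrow> real) \<Rightarrow> ('a \<Rightarrow> real \<Rightarrow> real) \<Rightarrow> real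
    \<Rightarrow> (real^'a) set \<Rightarrow> (real^'a \<Rightarrow> real^'a) \<Rightarrow> real \<Rightarrow> real \<Rightarrow> real^'a \<Rightarrow> real^'a
    \<Rightarrow> real^'a \<Rightarrow> real^'a \<Rightarrow> real" where
  "Psi t G \<eta> V dg \<rho> \<beta> yk vk y v =
     FF t G \<eta> y v + \<rho> * Phi t V dg y v yk vk + \<rho> * \<beta> * (norm (y - yk, v - vk))\<^sup>2"

definition partially_optimal :: "('y \<Rightarrow> 'v \<Rightarrow> real) \<Rightarrow> 'v set \<Rightarrow> 'y set \<Rightarrow> 'y \<Rightarrow> 'v \<Rightarrow> bool" where
  "partially_optimal P V U y v \<longleftrightarrow>
     (\<forall>v'\<in>V. P y v \<le> P y v') \<and> (\<forall>y'\<in>U. P y v \<le> P y' v)"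

text \<open>AMA_iterates P V U y0 ys vs: the sequences ys j = y^{k,j}, vs j = v^{k,j} (j \<ge> 1) are
  iterates of algorithm AMA applied to the objective P (= Psi^k), as long as it has not stopped.\<close>
definition AMA_iterates :: "('y \<Rightarrow> 'v \<Rightarrow> real) \<Rightarrow> 'v set \<Rightarrow> 'y set \<Rightarrow> 'y
    \<Rightarrow> (nat \<Rightarrow> 'y) \<Rightarrow> (nat \<Rightarrow> 'v) \<Rightarrow> bool" where
  "AMA_iterates P V U y0 ys vs \<longleftrightarrow> ys 0 = y0 \<and>
     (\<forall>j. (\<forall>i<j. \<not> partially_optimal P V U (ys (Suc i)) (vs (Suc i))) \<longrightarrow>
          (vs (Suc j) \<in> V \<and> (\<forall>v\<in>V. P (ys j) (vs (Suc j)) \<le> P (ys j) v)) \<and>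
          (ys (Suc j) \<in> U \<and> (\<forall>y\<in>U. P (ys (Suc j)) (vs (Suc j)) \<le> P y (vs (Suc j)))))"

text \<open>AMA_output P V U y0 out: out is a possible output of AMA: the returned point if AMA stops,
  otherwise an accumulation point of its iterates (y^{k,j}, v^{k,j}), j \<ge> 1.\<close>
definition AMA_output :: "('y::topological_space \<Rightarrow> 'v::topological_space \<Rightarrow> real) \<Rightarrow> 'v set
    \<Rightarrow> 'y set \<Rightarrow> 'y \<Rightarrow> 'y \<times> 'v \<Rightarrow> bool" where
  "AMA_output P V U y0 out \<longleftrightarrow> (\<exists>ys vs. AMA_iterates P V U y0 ys vs \<and>
     (if \<exists>j. partially_optimal P V U (ys (Suc j)) (vs (Suc j))
      then (let j0 = (LEAST j. partially_optimal P V U (ys (Suc j)) (vs (Suc j)))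
            in out = (ys (Suc j0), vs (Suc j0)))
      else (\<exists>r::nat \<Rightarrow> nat. strict_mono r \<and>
              ((\<lambda>j. (ys (Suc (r j)), vs (Suc (r j)))) \<longlongrightarrow> out) sequentially)))"

end

theory Submission
  imports Defs
begin

(* Write Phi_k for the linearized DC gap Phi(y^{k+1}, v^{k+1}; y^k, v^k). AMA never increases
   Psi^k, so its output is no worse than (y^k, v) for any v in V. Taking v nearly optimal for
   f(y^k, .) and bounding F on the compact set Y x V gives rho_k Phi_k <= C + rho_k eps3/2.
   Hence rho can only be multiplied by sigma while rho_k <= 2C/eps3, i.e. finitely often, and
   from some index on Phi_k <= eps3 and rho is constant. From then on the tangent inequality
   for the convex function g shows that the merit value Psi^k(y^k, v^k) = F + rho (f - g)
   drops by at least theta_l times the squared step length; being bounded below, it forces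
   steps shorter than min eps1 eps2 infinitely often, and at such a step the test passes. *)

lemma eventually_not_scaled_if_bounded:
  fixes r :: "nat \<Rightarrow> real"
  assumes r0: "r 0 > 0" and sigma: "\<sigma> > 1"
    and update: "\<And>k. r (Suc k) = (if P k then \<sigma> * r k else r k)"
    and bound: "\<And>k. r k \<le> R"
  shows "\<forall>\<^sub>F k in sequentially. \<not> P k"
proof (rule ccontr)
  assume "\<not> (\<forall>\<^sub>F k in sequentially. \<not> P k)"
  then have often: "\<exists>\<^sub>F k in sequentially. P k"
    by (simp add: not_eventually)
  have pos: "r k > 0" for k
    by (induction k) (use r0 sigma update in auto)
  have "incseq r"
    by (rule incseq_SucI) (use sigma pos update in \<open>simp add: less_imp_le\<close>)
  have grow: "\<exists>k. \<sigma> ^ n * r 0 \<le> r k" for n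
  proof (induction n)
    case 0 then show ?case by auto
  next
    case (Suc n)
    then obtain k where k: "\<sigma> ^ n * r 0 \<le> r k" by blast
    obtain k' where "k \<le> k'" "P k'"
      using often by (auto simp: frequently_sequentially)
    then have "\<sigma> ^ Suc n * r 0 \<le> r (Suc k')"
      using k \<open>incseq r\<close> sigma update[of k'] by (simp add: incseq_def order_trans)
    then show ?case by blast
  qed
  obtain n where "R / r 0 < \<sigma> ^ n"
    using real_arch_pow[OF sigma] by blast
  then have "R < \<sigma> ^ n * r 0"
    using r0 by (simp add: pos_divide_less_eq)
  with grow[of n] bound show False
    by (meson linorder_not_le order_trans)
qed

lemma frequently_small_if_sufficient_decrease:
  fixes M D :: "nat \<Rightarrow> real"
  assumes decrease: "\<forall>\<^sub>F k in sequentially. M (Suc k) + \<theta> * D k \<le> M k"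
    and bound: "\<And>k. B \<le> M k" and \<theta>: "\<theta> > 0" and c: "c > 0"
  shows "\<exists>\<^sub>F k in sequentially. D k < c"
proof (rule ccontr)
  assume "\<not> (\<exists>\<^sub>F k in sequentially. D k < c)"
  then have "\<forall>\<^sub>F k in sequentially. c \<le> D k"
    by (simp add: not_frequently not_less)
  with decrease have "\<forall>\<^sub>F k in sequentially. M (Suc k) + \<theta> * c \<le> M k"
    by eventually_elim (use \<theta> in \<open>smt (verit) mult_left_mono\<close>)
  then obtain K where K: "\<And>k. K \<le> k \<Longrightarrow> M (Suc k) + \<theta> * c \<le> M k"
    by (auto simp: eventually_sequentially)
  have telescope: "M (K + n) + n * (\<theta> * c) \<le> M K" for n
  proof (induction n)
    case (Suc n)
    then show ?case using K[of "K + n"] by (simp add: algebra_simps)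
  qed simp
  obtain n :: nat where "(M K - B) / (\<theta> * c) < n"
    using reals_Archimedean2 by blast
  then have "M K - B < n * (\<theta> * c)"
    using \<theta> c by (simp add: pos_divide_less_eq)
  with telescope[of n] bound[of "K + n"] show False
    by linarith
qed

locale dc_penalty_problem =
  fixes F f :: "'y::real_inner \<Rightarrow> 'v::real_normed_vector \<Rightarrow> real"
    and g :: "'y \<Rightarrow> real" and dg :: "'y \<Rightarrow> 'y"
    and Y :: "'y set" and V :: "'v set"
  assumes F_bounded: "bounded (case_prod F ` (Y \<times> V))"
    and V_bounded: "bounded V"
    and g_le: "\<And>y v. y \<in> Y \<Longrightarrow> v \<in> V \<Longrightarrow> g y \<le> f y v"
    and g_approx: "\<And>y e. y \<in> Y \<Longrightarrow> e > 0 \<Longrightarrow> \<exists>v\<in>V. f y v < g y + e"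
    and g_above_tangent: "\<And>y y'. y \<in> Y \<Longrightarrow> y' \<in> Y \<Longrightarrow> g y + dg y \<bullet> (y' - y) \<le> g y'"
begin

definition dc_gap :: "'y \<Rightarrow> 'v \<Rightarrow> 'y \<Rightarrow> real" where
  "dc_gap y v yb = f y v - g yb - dg yb \<bullet> (y - yb)"

definition penalty_obj :: "real \<Rightarrow> real \<Rightarrow> 'y \<Rightarrow> 'v \<Rightarrow> 'y \<Rightarrow> 'v \<Rightarrow> real" where
  "penalty_obj \<rho> \<beta> yk vk y v =
     F y v + \<rho> * dc_gap y v yk + \<rho> * \<beta> * (norm (y - yk, v - vk))\<^sup>2"

lemma penalty_obj_center:
  "penalty_obj \<rho> \<beta> yk vk yk vk = F yk vk + \<rho> * (f yk vk - g yk)"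
  by (simp add: penalty_obj_def dc_gap_def)

lemma F_bounds:
  obtains B where "\<And>y v. y \<in> Y \<Longrightarrow> v \<in> V \<Longrightarrow> \<bar>F y v\<bar> \<le> B"
  using F_bounded by (force simp: bounded_iff)

end

(* An infinite run of the outer loop of PDC, the stopping test being ignored; of AMA only the
   descent of Psi^k against (y^k, v), v in V, is used. *)
locale pdc_outer_loop = dc_penalty_problem F f g dg Y V
  for F f :: "'y::real_inner \<Rightarrow> 'v::real_normed_vector \<Rightarrow> real"
    and g :: "'y \<Rightarrow> real" and dg :: "'y \<Rightarrow> 'y"
    and Y :: "'y set" and V :: "'v set" +
  fixes ys :: "nat \<Rightarrow> 'y" and vs :: "nat \<Rightarrow> 'v" and \<rho> \<beta> :: "nat \<Rightarrow> real"
    and \<epsilon>1 \<epsilon>2 \<epsilon>3 \<theta>l \<theta>u \<sigma> :: real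
  assumes ys_in: "\<And>k. ys k \<in> Y" and vs_in: "\<And>k. vs k \<in> V"
    and descent: "\<And>k v. v \<in> V \<Longrightarrow>
      penalty_obj (\<rho> k) (\<beta> k) (ys k) (vs k) (ys (Suc k)) (vs (Suc k))
        \<le> penalty_obj (\<rho> k) (\<beta> k) (ys k) (vs k) (ys k) v"
    and rho_0: "\<rho> 0 > 0" and sigma_gt_1: "\<sigma> > 1"
    and rho_update: "\<And>k. \<rho> (Suc k) =
      (if dc_gap (ys (Suc k)) (vs (Suc k)) (ys k) > \<epsilon>3 then \<sigma> * \<rho> k else \<rho> k)"
    and beta_bounds: "\<And>k. \<theta>l / \<rho> k \<le> \<beta> k" "\<And>k. \<beta> k \<le> \<theta>u / \<rho> k"
    and theta_l_pos: "\<theta>l > 0" and eps_pos: "\<epsilon>1 > 0" "\<epsilon>2 > 0" "\<epsilon>3 > 0"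
begin

abbreviation step_gap :: "nat \<Rightarrow> real" where
  "step_gap k \<equiv> dc_gap (ys (Suc k)) (vs (Suc k)) (ys k)"

abbreviation merit :: "nat \<Rightarrow> real" where
  "merit k \<equiv> penalty_obj (\<rho> k) (\<beta> k) (ys k) (vs k) (ys k) (vs k)"

lemma rho_pos: "\<rho> k > 0"
  by (induction k) (use rho_0 sigma_gt_1 rho_update in auto)

lemma rho_beta_bounds: "\<theta>l \<le> \<rho> k * \<beta> k" "\<rho> k * \<beta> k \<le> \<theta>u"
  using beta_bounds[of k] rho_pos[of k]
  by (simp_all add: pos_divide_le_eq pos_le_divide_eq mult.commute)

lemma penalized_step_gap_bounded:
  obtains C where "\<And>k. \<rho> k * step_gap k \<le> C + \<rho> k * (\<epsilon>3 / 2)"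
proof -
  obtain B where B: "\<And>y v. y \<in> Y \<Longrightarrow> v \<in> V \<Longrightarrow> \<bar>F y v\<bar> \<le> B"
    using F_bounds by blast
  define D where "D = diameter V"
  have "\<rho> k * step_gap k \<le> 2 * B + \<theta>u * D\<^sup>2 + \<rho> k * (\<epsilon>3 / 2)" for k
  proof -
    obtain v where v: "v \<in> V" "f (ys k) v < g (ys k) + \<epsilon>3 / 2"
      using g_approx[OF ys_in, of "\<epsilon>3 / 2"] eps_pos(3) by auto
    have "norm (v - vs k) \<le> D"
      using diameter_bounded_bound[OF V_bounded v(1) vs_in] by (simp add: D_def dist_norm)
    then have "\<rho> k * \<beta> k * (norm (v - vs k))\<^sup>2 \<le> \<theta>u * D\<^sup>2"
      using rho_beta_bounds[of k] theta_l_pos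
      by (meson mult_mono norm_ge_zero order_trans power_mono zero_le_power2 less_imp_le)
    moreover have "\<rho> k * (f (ys k) v - g (ys k)) \<le> \<rho> k * (\<epsilon>3 / 2)"
      using v(2) rho_pos[of k] by simp
    moreover have "F (ys k) v \<le> B"
      using B[OF ys_in v(1)] by (simp add: abs_le_iff)
    ultimately have "penalty_obj (\<rho> k) (\<beta> k) (ys k) (vs k) (ys k) v
        \<le> B + \<rho> k * (\<epsilon>3 / 2) + \<theta>u * D\<^sup>2"
      by (simp add: penalty_obj_def dc_gap_def norm_Pair)
    moreover have "- B \<le> F (ys (Suc k)) (vs (Suc k))"
      using B[OF ys_in vs_in, of "Suc k" "Suc k"] by (simp add: abs_le_iff)
    then have "- B + \<rho> k * step_gap k
        \<le> penalty_obj (\<rho> k) (\<beta> k) (ys k) (vs k) (ys (Suc k)) (vs (Suc k))"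
      using rho_beta_bounds(1)[of k] theta_l_pos by (simp add: penalty_obj_def add_increasing2)
    ultimately show ?thesis
      using descent[OF v(1), of k] by linarith
  qed
  then show thesis by (rule that)
qed

lemma rho_bounded: obtains R where "\<And>k. \<rho> k \<le> R"
proof -
  obtain C where C: "\<And>k. \<rho> k * step_gap k \<le> C + \<rho> k * (\<epsilon>3 / 2)"
    using penalized_step_gap_bounded by blast
  have increase_small: "\<rho> k \<le> 2 * C / \<epsilon>3" if "step_gap k > \<epsilon>3" for k
  proof -
    have "\<rho> k * \<epsilon>3 < \<rho> k * step_gap k"
      using that rho_pos[of k] by simp
    with C[of k] have "\<rho> k * \<epsilon>3 < 2 * C" by linarith
    then show ?thesis using eps_pos(3) by (simp add: pos_le_divide_eq)
  qed
  have "\<rho> k \<le> max (\<rho> 0) (\<sigma> * (2 * C / \<epsilon>3))" for k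
  proof (induction k)
    case (Suc k)
    then show ?case
      using rho_update[of k] mult_left_mono[OF increase_small, of k \<sigma>] sigma_gt_1
      by (auto simp: le_max_iff_disj)
  qed simp
  then show thesis by (rule that)
qed

lemma eventually_step_gap_le: "\<forall>\<^sub>F k in sequentially. step_gap k \<le> \<epsilon>3"
proof -
  obtain R where "\<And>k. \<rho> k \<le> R" using rho_bounded by blast
  from eventually_not_scaled_if_bounded[where P = "\<lambda>k. step_gap k > \<epsilon>3", OF rho_0 sigma_gt_1 rho_update this]
  show ?thesis by (simp add: not_less)
qed

lemma merit_bounded_below: obtains B where "\<And>k. B \<le> merit k"
proof -
  obtain B where B: "\<And>y v. y \<in> Y \<Longrightarrow> v \<in> V \<Longrightarrow> \<bar>F y v\<bar> \<le> B"
    using F_bounds by blast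
  have "- B \<le> merit k" for k
    using B[OF ys_in vs_in, of k k] g_le[OF ys_in vs_in, of k k] rho_pos[of k]
    by (simp add: penalty_obj_center) (smt (verit) mult_nonneg_nonneg)
  then show thesis by (rule that)
qed

lemma merit_sufficient_decrease:
  assumes "step_gap k \<le> \<epsilon>3"
  shows "merit (Suc k) + \<theta>l * (norm (ys (Suc k) - ys k, vs (Suc k) - vs k))\<^sup>2 \<le> merit k"
proof -
  have "\<rho> (Suc k) = \<rho> k" using assms rho_update[of k] by simp
  moreover have "f (ys (Suc k)) (vs (Suc k)) - g (ys (Suc k)) \<le> step_gap k"
    using g_above_tangent[OF ys_in ys_in, of k "Suc k"] by (simp add: dc_gap_def)
  ultimately have "merit (Suc k) \<le> F (ys (Suc k)) (vs (Suc k)) + \<rho> k * step_gap k"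
    using rho_pos[of k] by (simp add: penalty_obj_center)
  moreover have "\<theta>l * (norm (ys (Suc k) - ys k, vs (Suc k) - vs k))\<^sup>2
      \<le> \<rho> k * \<beta> k * (norm (ys (Suc k) - ys k, vs (Suc k) - vs k))\<^sup>2"
    using rho_beta_bounds(1)[of k] by (simp add: mult_right_mono)
  ultimately have "merit (Suc k) + \<theta>l * (norm (ys (Suc k) - ys k, vs (Suc k) - vs k))\<^sup>2
      \<le> penalty_obj (\<rho> k) (\<beta> k) (ys k) (vs k) (ys (Suc k)) (vs (Suc k))"
    by (simp add: penalty_obj_def)
  also have "\<dots> \<le> merit k" by (rule descent[OF vs_in])
  finally show ?thesis .
qed

theorem stopping_test_passes:
  "\<exists>k. norm (ys (Suc k) - ys k) \<le> \<epsilon>1 \<and> norm (vs (Suc k) - vs k) \<le> \<epsilon>2 \<and> step_gap k \<le> \<epsilon>3"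
proof -
  define e where "e = min \<epsilon>1 \<epsilon>2"
  have e: "e > 0" using eps_pos by (simp add: e_def)
  obtain B where "\<And>k. B \<le> merit k" using merit_bounded_below by blast
  moreover have "\<forall>\<^sub>F k in sequentially.
      merit (Suc k) + \<theta>l * (norm (ys (Suc k) - ys k, vs (Suc k) - vs k))\<^sup>2 \<le> merit k"
    using eventually_step_gap_le by eventually_elim (rule merit_sufficient_decrease)
  ultimately have "\<exists>\<^sub>F k in sequentially. (norm (ys (Suc k) - ys k, vs (Suc k) - vs k))\<^sup>2 < e\<^sup>2"
    using theta_l_pos e by (intro frequently_small_if_sufficient_decrease) auto
  then have "\<exists>\<^sub>F k in sequentially. step_gap k \<le> \<epsilon>3 \<and>
      (norm (ys (Suc k) - ys k, vs (Suc k) - vs k))\<^sup>2 < e\<^sup>2"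
    using eventually_step_gap_le by (rule frequently_eventually_conj)
  then obtain k where k: "step_gap k \<le> \<epsilon>3"
      "norm (ys (Suc k) - ys k, vs (Suc k) - vs k) < e"
    using e by (auto dest!: frequently_ex simp: power_less_imp_less_base)
  moreover have "norm (ys (Suc k) - ys k) \<le> \<epsilon>1" "norm (vs (Suc k) - vs k) \<le> \<epsilon>2"
    using k(2) norm_fst_le[of "ys (Suc k) - ys k" "vs (Suc k) - vs k"]
      norm_snd_le[of "vs (Suc k) - vs k" "ys (Suc k) - ys k"]
    by (auto simp: e_def)
  ultimately show ?thesis by blast
qed

end

lemma AMA_iterates_descent:
  assumes it: "AMA_iterates P V U y0 ys vs" and y0: "y0 \<in> U"
  shows "(\<forall>i<j. \<not> partially_optimal P V U (ys (Suc i)) (vs (Suc i))) \<Longrightarrow>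
    ys (Suc j) \<in> U \<and> vs (Suc j) \<in> V \<and> (\<forall>v\<in>V. P (ys (Suc j)) (vs (Suc j)) \<le> P y0 v)"
proof (induction j)
  case 0
  then have "vs 1 \<in> V" "\<forall>v\<in>V. P y0 (vs 1) \<le> P y0 v"
      "ys 1 \<in> U" "P (ys 1) (vs 1) \<le> P y0 (vs 1)"
    using it y0 unfolding AMA_iterates_def by (auto simp flip: One_nat_def)
  then show ?case by force
next
  case (Suc j)
  then have IH: "ys (Suc j) \<in> U" "vs (Suc j) \<in> V" "\<forall>v\<in>V. P (ys (Suc j)) (vs (Suc j)) \<le> P y0 v"
    by auto
  have "vs (Suc (Suc j)) \<in> V" "ys (Suc (Suc j)) \<in> U"
      "P (ys (Suc j)) (vs (Suc (Suc j))) \<le> P (ys (Suc j)) (vs (Suc j))"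
      "P (ys (Suc (Suc j))) (vs (Suc (Suc j))) \<le> P (ys (Suc j)) (vs (Suc (Suc j)))"
    using it Suc.prems IH(1,2) unfolding AMA_iterates_def by blast+
  with IH(3) show ?case by (meson order_trans)
qed

lemma AMA_output_descent:
  fixes P :: "'y::metric_space \<Rightarrow> 'v::metric_space \<Rightarrow> real"
  assumes "closed U" "closed V"
    and cont: "continuous_on (U \<times> V) (\<lambda>z. P (fst z) (snd z))"
    and y0: "y0 \<in> U" and out: "AMA_output P V U y0 out"
  shows "fst out \<in> U \<and> snd out \<in> V \<and> (\<forall>v\<in>V. P (fst out) (snd out) \<le> P y0 v)"
proof -
  obtain ys vs where it: "AMA_iterates P V U y0 ys vs" and
    out_cases: "if \<exists>j. partially_optimal P V U (ys (Suc j)) (vs (Suc j))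
      then (let j0 = (LEAST j. partially_optimal P V U (ys (Suc j)) (vs (Suc j)))
            in out = (ys (Suc j0), vs (Suc j0)))
      else (\<exists>r::nat \<Rightarrow> nat. strict_mono r \<and>
              ((\<lambda>j. (ys (Suc (r j)), vs (Suc (r j)))) \<longlongrightarrow> out) sequentially)"
    using out unfolding AMA_output_def by blast
  note descent = AMA_iterates_descent[OF it y0]
  show ?thesis
  proof (cases "\<exists>j. partially_optimal P V U (ys (Suc j)) (vs (Suc j))")
    case True
    define j0 where "j0 = (LEAST j. partially_optimal P V U (ys (Suc j)) (vs (Suc j)))"
    have "out = (ys (Suc j0), vs (Suc j0))"
      using out_cases True by (simp add: j0_def Let_def)
    moreover have "\<forall>i<j0. \<not> partially_optimal P V U (ys (Suc i)) (vs (Suc i))"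
      unfolding j0_def using not_less_Least by blast
    ultimately show ?thesis using descent[of j0] by simp
  next
    case False
    then obtain r :: "nat \<Rightarrow> nat"
      where lim: "((\<lambda>j. (ys (Suc (r j)), vs (Suc (r j)))) \<longlongrightarrow> out) sequentially"
      using out_cases by auto
    have in_UV: "(ys (Suc (r j)), vs (Suc (r j))) \<in> U \<times> V" for j
      using descent False by blast
    have "out \<in> U \<times> V"
      using closed_sequentially[OF closed_Times[OF assms(1,2)] in_UV lim] .
    moreover have "(\<lambda>j. P (ys (Suc (r j))) (vs (Suc (r j)))) \<longlonglongrightarrow> P (fst out) (snd out)"
      using continuous_on_tendsto_compose[OF cont lim \<open>out \<in> U \<times> V\<close>] in_UV by simp
    then have "P (fst out) (snd out) \<le> P y0 v" if "v \<in> V" for v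
      by (rule LIMSEQ_le_const2) (use descent False that in blast)
    ultimately show ?thesis by auto
  qed
qed

lemma AMA_output_sequence_descent:
  fixes P :: "nat \<Rightarrow> 'y::metric_space \<Rightarrow> 'v::metric_space \<Rightarrow> real"
  assumes "closed U" "closed V"
    and cont: "\<And>k. continuous_on (U \<times> V) (\<lambda>z. P k (fst z) (snd z))"
    and "ys 0 \<in> U" and out: "\<And>k. AMA_output (P k) V U (ys k) (ys (Suc k), vs (Suc k))"
  shows "ys k \<in> U" and "vs (Suc k) \<in> V"
    and "v \<in> V \<Longrightarrow> P k (ys (Suc k)) (vs (Suc k)) \<le> P k (ys k) v"
proof -
  show ys_in: "ys k \<in> U" for k
  proof (induction k)
    case (Suc k)
    from AMA_output_descent[OF assms(1,2) cont Suc out] show ?case by simp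
  qed (rule assms(4))
  show "vs (Suc k) \<in> V" "v \<in> V \<Longrightarrow> P k (ys (Suc k)) (vs (Suc k)) \<le> P k (ys k) v"
    using AMA_output_descent[OF assms(1,2) cont ys_in out, of k] by auto
qed

lemma convex_on_gradient_inequality:
  fixes g :: "'n::real_inner \<Rightarrow> real"
  assumes S: "convex S" and cg: "convex_on S g"
    and dg: "(g has_derivative (\<lambda>h. D \<bullet> h)) (at x within S)"
    and x: "x \<in> S" and y: "y \<in> S"
  shows "g x + D \<bullet> (y - x) \<le> g y"
proof -
  define p where "p s = x + s *\<^sub>R (y - x)" for s :: real
  have p_in: "p ` {0..1} \<subseteq> S"
  proof clarify
    fix s :: real assume "s \<in> {0..1}"
    then have "(1 - s) *\<^sub>R x + s *\<^sub>R y \<in> S" using S x y by (intro convexD) auto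
    then show "p s \<in> S" by (simp add: p_def algebra_simps)
  qed
  have "(p has_derivative (\<lambda>s. s *\<^sub>R (y - x))) (at 0 within {0..1})"
    unfolding p_def by (auto intro!: derivative_eq_intros)
  moreover have "(g has_derivative (\<lambda>h. D \<bullet> h)) (at (p 0) within p ` {0..1})"
    using has_derivative_subset[OF dg p_in] by (simp add: p_def)
  ultimately have "((\<lambda>s. g (p s)) has_derivative (\<lambda>s. D \<bullet> (s *\<^sub>R (y - x)))) (at 0 within {0..1})"
    by (rule has_derivative_in_compose)
  then have "((\<lambda>s. g (p s)) has_field_derivative D \<bullet> (y - x)) (at 0 within {0..1})"
    by (simp add: has_field_derivative_def inner_scaleR_right mult.commute[of _ "D \<bullet> (y - x)"])
  then have lim: "((\<lambda>s. (g (p s) - g x) / s) \<longlongrightarrow> D \<bullet> (y - x)) (at_right 0)"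
    by (simp add: has_field_derivative_iff at_within_Icc_at_right p_def)
  \<comment> \<open>Convexity along the segment bounds every difference quotient by g y - g x.\<close>
  have "\<forall>\<^sub>F s in at_right 0. (g (p s) - g x) / s \<le> g y - g x"
  proof (rule eventually_mono[OF eventually_at_right_real[of 0 1]])
    fix s :: real assume "s \<in> {0<..<1}"
    then have s: "0 < s" "s < 1" by auto
    have "g (p s) = g ((1 - s) *\<^sub>R x + s *\<^sub>R y)" by (simp add: p_def algebra_simps)
    also have "\<dots> \<le> (1 - s) * g x + s * g y"
      using convex_onD[OF cg, of s x y] s x y by simp
    finally have "g (p s) - g x \<le> s * (g y - g x)"
      by (simp add: algebra_simps)
    then show "(g (p s) - g x) / s \<le> g y - g x"
      using s by (simp add: divide_le_eq mult.commute)
  qed simp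
  then have "D \<bullet> (y - x) \<le> g y - g x"
    by (rule tendsto_upperbound[OF lim]) simp
  then show ?thesis by simp
qed

lemma integral_0_rescale:
  fixes f :: "real \<Rightarrow> real"
  assumes "0 \<le> v"
  shows "integral {0..v} f = v * integral {0..1} (\<lambda>s. f (v * s))"
proof (cases "v = 0")
  case False
  with assms have v: "v > 0" by simp
  have "(\<lambda>x. x / v) ` {0..v} = {0..1}"
    using v by (auto simp: image_iff field_simps intro!: bexI[where x = "v * _"])
  moreover have "integral ((\<lambda>x. x / v) ` {0..v}) (\<lambda>x. f (v * x)) = (1 / \<bar>v\<bar>) *\<^sub>R integral {0..v} f"
    using v by (intro integral_stretch_real) simp
  ultimately show ?thesis using v by simp
qed simp

lemma continuous_on_integral_0_upper:
  fixes T :: "'a::topological_space \<Rightarrow> real \<Rightarrow> real"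
  assumes T: "continuous_on (S \<times> {0..}) (\<lambda>p. T (fst p) (snd p))"
  shows "continuous_on (S \<times> {0..}) (\<lambda>p. integral {0..snd p} (T (fst p)))"
proof -
  \<comment> \<open>Rescaling to the fixed interval [0,1] makes the integration domain independent of p.\<close>
  have "continuous_on ((S \<times> {0..}) \<times> cbox 0 1)
      (\<lambda>q. (\<lambda>p. T (fst p) (snd p)) (fst (fst q), snd (fst q) * snd q))"
    by (rule continuous_on_compose2[OF T]) (auto intro!: continuous_intros)
  then have "continuous_on ((S \<times> {0..}) \<times> cbox 0 1) (\<lambda>(p, s). T (fst p) (snd p * s))"
    by (simp add: case_prod_unfold)
  then have "continuous_on (S \<times> {0..}) (\<lambda>p. snd p * integral (cbox 0 1) (\<lambda>s. T (fst p) (snd p * s)))"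
    by (intro continuous_intros integral_continuous_on_param)
  then show ?thesis
  proof (rule continuous_on_eq)
    fix p :: "'a \<times> real"
    assume "p \<in> S \<times> {0..}"
    then show "snd p * integral (cbox 0 1) (\<lambda>s. T (fst p) (snd p * s)) = integral {0..snd p} (T (fst p))"
      using integral_0_rescale[of "snd p" "T (fst p)"] by auto
  qed
qed

lemma C1_on_imp_continuous_on: "C1_on S f \<Longrightarrow> continuous_on S f"
  unfolding C1_on_def continuous_on_eq_continuous_within
  using has_derivative_continuous by blast

lemma C1_on_quadrant_imp_continuous_on:
  "C1_on {p::real \<times> real. 0 \<le> fst p \<and> 0 \<le> snd p} h \<Longrightarrow> continuous_on ({0..} \<times> {0..}) h"
  by (drule C1_on_imp_continuous_on) (erule continuous_on_subset, auto)

lemma Yset_eq_cbox: "Yset u = cbox 0 u"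
  by (auto simp: Yset_def mem_box_cart)

lemma Upsilon_subset_Yset: "Upsilon u \<tau> \<subseteq> Yset u"
  unfolding Upsilon_def by auto

lemma closed_Upsilon: "closed (Upsilon u \<tau>)"
  unfolding closed_sequential_limits
proof (intro allI impI, elim conjE)
  fix x f assume f: "\<forall>n. f n \<in> Upsilon u \<tau>" and lim: "f \<longlonglongrightarrow> x"
  have "x \<in> Yset u"
    using closed_sequentially[of "Yset u" f x] f lim Upsilon_subset_Yset
    by (auto simp: Yset_eq_cbox)
  \<comment> \<open>The support can only shrink in the limit, since positivity of a component is an open condition.\<close>
  have "\<forall>\<^sub>F n in sequentially. \<forall>a\<in>{a. x $ a > 0}. f n $ a > 0"
    by (intro eventually_ball_finite ballI order_tendstoD(1)[OF tendsto_vec_nth[OF lim]]) auto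
  then obtain N where "{a. x $ a > 0} \<subseteq> {a. f N $ a > 0}"
    by (auto simp: eventually_sequentially)
  then have "card {a. x $ a > 0} \<le> card {a. f N $ a > 0}"
    by (simp add: card_mono)
  also have "\<dots> \<le> \<tau>" using f by (simp add: Upsilon_def)
  finally show "x \<in> Upsilon u \<tau>" using \<open>x \<in> Yset u\<close> by (simp add: Upsilon_def)
qed

lemma Vset_nonneg:
  assumes "\<forall>a r. Delta $ a $ r = 0 \<or> Delta $ a $ r = 1" and "v \<in> Vset Delta Lambda d"
  shows "0 \<le> v"
proof -
  from assms(2) obtain h where "\<forall>r. 0 \<le> h $ r" "v = Delta *v h"
    unfolding Vset_def by auto
  with assms(1) show ?thesis
    by (auto simp: less_eq_vec_def matrix_vector_mult_def intro!: sum_nonneg)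
       (metis mult_nonneg_nonneg order_refl zero_le_one)
qed

lemma compact_Vset:
  fixes Lambda :: "real^'r::finite^'w::finite"
  assumes Lambda01: "\<forall>w r. Lambda $ w $ r = 0 \<or> Lambda $ w $ r = 1"
    and route_one_OD: "\<forall>r. \<exists>!w. Lambda $ w $ r = 1"
    and d_pos: "\<forall>w. d $ w > 0"
  shows "compact (Vset Delta Lambda d)"
proof -
  define H where "H = {h::real^'r. (\<forall>r. 0 \<le> h $ r) \<and> Lambda *v h = d}"
  have "closed H"
    unfolding H_def Collect_conj_eq
    by (intro closed_Int closed_Collect_all closed_Collect_le closed_Collect_eq continuous_intros)
  moreover have "bounded H"
    unfolding bounded_iff
  proof (intro exI ballI)
    fix h assume h: "h \<in> H"
    \<comment> \<open>The flow on a route is at most the demand of its unique OD pair.\<close>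
    have route_bound: "h $ r \<le> (\<Sum>w\<in>UNIV. d $ w)" for r
    proof -
      obtain w where w: "Lambda $ w $ r = 1" using route_one_OD by blast
      have nonneg: "0 \<le> Lambda $ w $ r' * h $ r'" for r'
        using Lambda01[rule_format, of w r'] h unfolding H_def by auto
      have "h $ r = Lambda $ w $ r * h $ r" using w by simp
      also have "\<dots> \<le> (\<Sum>r'\<in>UNIV. Lambda $ w $ r' * h $ r')"
        by (rule member_le_sum) (use nonneg in simp_all)
      also have "\<dots> = d $ w" using h unfolding H_def by (auto simp: matrix_vector_mult_def)
      also have "\<dots> \<le> (\<Sum>w\<in>UNIV. d $ w)"
        by (rule member_le_sum) (use d_pos in \<open>simp_all add: less_imp_le\<close>)
      finally show ?thesis .
    qed
    have "norm h \<le> (\<Sum>r\<in>UNIV. \<bar>h $ r\<bar>)" by (rule norm_le_l1_cart)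
    also have "\<dots> \<le> (\<Sum>r\<in>(UNIV::'r set). \<Sum>w\<in>UNIV. d $ w)"
    proof (rule sum_mono)
      fix r show "\<bar>h $ r\<bar> \<le> (\<Sum>w\<in>UNIV. d $ w)"
        using h route_bound[of r] unfolding H_def by simp
    qed
    finally show "norm h \<le> (\<Sum>r\<in>(UNIV::'r set). \<Sum>w\<in>UNIV. d $ w)" .
  qed
  ultimately have "compact ((*v) Delta ` H)"
    by (intro compact_continuous_image continuous_intros) (simp add: compact_eq_bounded_closed)
  moreover have "(*v) Delta ` H = Vset Delta Lambda d"
    unfolding H_def Vset_def by blast
  ultimately show ?thesis by simp
qed

lemma continuous_on_component_pair:
  fixes h :: "real \<Rightarrow> real \<Rightarrow> real"
  assumes "continuous_on ({0..} \<times> {0..}) (\<lambda>q. h (fst q) (snd q))"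
  shows "continuous_on ({0..} \<times> ({0..} :: (real^'a) set)) (\<lambda>p. h (fst p $ a) (snd p $ a))"
  by (rule continuous_on_compose2[OF assms, where f = "\<lambda>p. (fst p $ a, snd p $ a)", simplified])
     (auto simp: less_eq_vec_def intro!: continuous_intros)

lemma continuous_on_ff:
  assumes "\<And>a. continuous_on ({0..} \<times> {0..}) (\<lambda>q. t a (fst q) (snd q))"
  shows "continuous_on ({0..} \<times> ({0..} :: (real^'a) set)) (\<lambda>p. ff t (fst p) (snd p))"
  unfolding ff_def
  by (intro continuous_on_sum continuous_on_component_pair[where h = "\<lambda>y v. integral {0..v} (t _ y)"]
      continuous_on_integral_0_upper assms)

lemma continuous_on_FF:
  assumes "\<And>a. continuous_on ({0..} \<times> {0..}) (\<lambda>q. t a (fst q) (snd q))"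
    and "\<And>a. continuous_on {0..} (G a)"
  shows "continuous_on ({0..} \<times> ({0..} :: (real^'a) set)) (\<lambda>p. FF t G \<eta> (fst p) (snd p))"
proof -
  have G_comp: "continuous_on ({0..} \<times> ({0..} :: (real^'a) set)) (\<lambda>p. G a (fst p $ a))" for a
    by (rule continuous_on_compose2[OF assms(2)]) (auto simp: less_eq_vec_def intro!: continuous_intros)
  show ?thesis
    unfolding FF_def
    by (intro continuous_intros continuous_on_sum continuous_on_component_pair[OF assms(1)] G_comp)
qed

lemma continuous_on_Psi:
  assumes "\<And>a. continuous_on ({0..} \<times> {0..}) (\<lambda>q. t a (fst q) (snd q))"
    and "\<And>a. continuous_on {0..} (G a)"
  shows "continuous_on ({0..} \<times> ({0..} :: (real^'a) set)) (\<lambda>p. Psi t G \<eta> V dg \<rho> \<beta> yk vk (fst p) (snd p))"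
  unfolding Psi_def Phi_def
  by (intro continuous_intros continuous_on_FF continuous_on_ff assms)

lemma Yset_Vset_nonneg:
  assumes "\<forall>a r. Delta $ a $ r = 0 \<or> Delta $ a $ r = 1"
  shows "Yset u \<times> Vset Delta Lambda d \<subseteq> {0..} \<times> {0..}"
  by (auto simp: Yset_eq_cbox mem_box_cart less_eq_vec_def dest: Vset_nonneg[OF assms])

lemma traffic_dc_penalty_problem:
  fixes Delta :: "real^'r::finite^'a::finite" and Lambda :: "real^'r^'w::finite"
    and t :: "'a \<Rightarrow> real \<Rightarrow> real \<Rightarrow> real"
  assumes Delta01: "\<forall>a r. Delta $ a $ r = 0 \<or> Delta $ a $ r = 1"
    and Lambda01: "\<forall>w r. Lambda $ w $ r = 0 \<or> Lambda $ w $ r = 1"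
    and route_one_OD: "\<forall>r. \<exists>!w. Lambda $ w $ r = 1"
    and d_pos: "\<forall>w. d $ w > 0"
    and V_nonempty: "Vset Delta Lambda d \<noteq> {}"
    and t_C1: "\<forall>a. C1_on {p. 0 \<le> fst p \<and> 0 \<le> snd p} (\<lambda>p. t a (fst p) (snd p))"
    and G_C1: "\<forall>a. C1_on {0..} (G a)"
    and g_convex: "convex_on (Yset u) (gg t (Vset Delta Lambda d))"
    and g_grad: "\<forall>y\<in>Yset u. (gg t (Vset Delta Lambda d) has_derivative (\<lambda>h. dg y \<bullet> h))
                               (at y within Yset u)"
  shows "dc_penalty_problem (FF t G \<eta>) (ff t) (gg t (Vset Delta Lambda d)) dg
           (Yset u) (Vset Delta Lambda d)"
proof -
  define V where "V = Vset Delta Lambda d"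
  have t_cont: "continuous_on ({0..} \<times> {0..}) (\<lambda>q. t a (fst q) (snd q))" for a
    using t_C1 C1_on_quadrant_imp_continuous_on by blast
  have G_cont: "continuous_on {0..} (G a)" for a
    using G_C1 C1_on_imp_continuous_on by blast
  have "compact V" unfolding V_def by (rule compact_Vset[OF Lambda01 route_one_OD d_pos])
  then have compact_YV: "compact (Yset u \<times> V)"
    by (simp add: Yset_eq_cbox compact_Times)
  have bounded_on_YV: "bounded (case_prod h ` (Yset u \<times> V))"
    if "continuous_on ({0..} \<times> {0..}) (\<lambda>p. h (fst p) (snd p))" for h :: "_ \<Rightarrow> _ \<Rightarrow> real"
    using compact_continuous_image[OF continuous_on_subset[OF that Yset_Vset_nonneg[OF Delta01, of u Lambda d, folded V_def]] compact_YV]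
    by (simp add: compact_imp_bounded case_prod_unfold)
  obtain B where B: "\<And>y v. y \<in> Yset u \<Longrightarrow> v \<in> V \<Longrightarrow> \<bar>ff t y v\<bar> \<le> B"
    using bounded_on_YV[OF continuous_on_ff[OF t_cont]] by (force simp: bounded_iff)
  have bdd: "bdd_below (ff t y ` V)" if "y \<in> Yset u" for y
    by (rule bdd_belowI[of _ "- B"]) (use B[OF that] in \<open>force simp: abs_le_iff\<close>)
  show ?thesis
  proof (unfold_locales, fold V_def)
    show "bounded (case_prod (FF t G \<eta>) ` (Yset u \<times> V))"
      by (intro bounded_on_YV continuous_on_FF t_cont G_cont)
    show "bounded V" using \<open>compact V\<close> by (rule compact_imp_bounded)
    show "gg t V y \<le> ff t y v" if "y \<in> Yset u" "v \<in> V" for y v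
      unfolding gg_def using bdd[OF that(1)] that(2) by (rule cINF_lower)
    show "\<exists>v\<in>V. ff t y v < gg t V y + e" if "y \<in> Yset u" "e > 0" for y e
    proof -
      have "Inf (ff t y ` V) < gg t V y + e" using that(2) by (simp add: gg_def)
      then show ?thesis
        using cInf_less_iff[of "ff t y ` V"] V_nonempty bdd[OF that(1)] by (auto simp: V_def)
    qed
    show "gg t V y + dg y \<bullet> (y' - y) \<le> gg t V y'" if "y \<in> Yset u" "y' \<in> Yset u" for y y'
      using convex_on_gradient_inequality[OF _ g_convex g_grad[rule_format]] that
      by (simp add: V_def Yset_eq_cbox convex_box)
  qed
qed

lemma traffic_AMA_outputs_descent:
  fixes Delta :: "real^'r::finite^'a::finite" and Lambda :: "real^'r^'w::finite"
    and t :: "'a \<Rightarrow> real \<Rightarrow> real \<Rightarrow> real"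
  assumes Delta01: "\<forall>a r. Delta $ a $ r = 0 \<or> Delta $ a $ r = 1"
    and Lambda01: "\<forall>w r. Lambda $ w $ r = 0 \<or> Lambda $ w $ r = 1"
    and route_one_OD: "\<forall>r. \<exists>!w. Lambda $ w $ r = 1"
    and d_pos: "\<forall>w. d $ w > 0"
    and t_C1: "\<forall>a. C1_on {p. 0 \<le> fst p \<and> 0 \<le> snd p} (\<lambda>p. t a (fst p) (snd p))"
    and G_C1: "\<forall>a. C1_on {0..} (G a)"
    and "ys 0 \<in> Upsilon u \<tau>"
    and AMA: "\<And>k. AMA_output (Psi t G \<eta> (Vset Delta Lambda d) dg (\<rho> k) (\<beta> k) (ys k) (vs k))
                 (Vset Delta Lambda d) (Upsilon u \<tau>) (ys k) (ys (Suc k), vs (Suc k))"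
  shows "ys k \<in> Upsilon u \<tau>" and "vs (Suc k) \<in> Vset Delta Lambda d"
    and "v \<in> Vset Delta Lambda d \<Longrightarrow>
      Psi t G \<eta> (Vset Delta Lambda d) dg (\<rho> k) (\<beta> k) (ys k) (vs k) (ys (Suc k)) (vs (Suc k))
        \<le> Psi t G \<eta> (Vset Delta Lambda d) dg (\<rho> k) (\<beta> k) (ys k) (vs k) (ys k) v"
proof -
  have t_cont: "continuous_on ({0..} \<times> {0..}) (\<lambda>q. t a (fst q) (snd q))" for a
    using t_C1 C1_on_quadrant_imp_continuous_on by blast
  have G_cont: "continuous_on {0..} (G a)" for a
    using G_C1 C1_on_imp_continuous_on by blast
  have "Upsilon u \<tau> \<times> Vset Delta Lambda d \<subseteq> {0..} \<times> {0..}"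
    using Upsilon_subset_Yset Yset_Vset_nonneg[OF Delta01] by blast
  then have "continuous_on (Upsilon u \<tau> \<times> Vset Delta Lambda d)
      (\<lambda>z. Psi t G \<eta> (Vset Delta Lambda d) dg (\<rho> k) (\<beta> k) (ys k) (vs k) (fst z) (snd z))" for k
    by (rule continuous_on_subset[OF continuous_on_Psi[OF t_cont G_cont]])
  moreover have "closed (Vset Delta Lambda d)"
    by (intro compact_imp_closed compact_Vset Lambda01 route_one_OD d_pos)
  ultimately show "ys k \<in> Upsilon u \<tau>" "vs (Suc k) \<in> Vset Delta Lambda d"
    "v \<in> Vset Delta Lambda d \<Longrightarrow>
      Psi t G \<eta> (Vset Delta Lambda d) dg (\<rho> k) (\<beta> k) (ys k) (vs k) (ys (Suc k)) (vs (Suc k))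
        \<le> Psi t G \<eta> (Vset Delta Lambda d) dg (\<rho> k) (\<beta> k) (ys k) (vs k) (ys k) v"
    using AMA_output_sequence_descent[OF closed_Upsilon _ _ assms(7) AMA] by blast+
qed

theorem proposition4p4:
  fixes Delta :: "real^'r::finite^'a::finite" and Lambda :: "real^'r^'w::finite"
    and d :: "real^'w" and u :: "real^'a" and \<tau> :: nat
    and t :: "'a \<Rightarrow> real \<Rightarrow> real \<Rightarrow> real" and G :: "'a \<Rightarrow> real \<Rightarrow> real" and \<eta> :: real
    and dg :: "real^'a \<Rightarrow> real^'a"
    and \<epsilon>1 \<epsilon>2 \<epsilon>3 \<theta>l \<theta>u \<rho>0 \<sigma> :: real and y0 :: "real^'a"
    and ys vs :: "nat \<Rightarrow> real^'a" and \<rho> \<beta> :: "nat \<Rightarrow> real"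
  assumes Delta01: "\<forall>a r. Delta $ a $ r = 0 \<or> Delta $ a $ r = 1"
    and Lambda01: "\<forall>w r. Lambda $ w $ r = 0 \<or> Lambda $ w $ r = 1"
    and route_one_OD: "\<forall>r. \<exists>!w. Lambda $ w $ r = 1"
    and OD_has_route: "\<forall>w. \<exists>r. Lambda $ w $ r = 1"
    and d_pos: "\<forall>w. d $ w > 0"
    and u_nonneg: "\<forall>a. u $ a \<ge> 0"
    and tau: "1 \<le> \<tau>" "\<tau> \<le> CARD('a)"
    and t_C1: "\<forall>a. C1_on {p. 0 \<le> fst p \<and> 0 \<le> snd p} (\<lambda>p. t a (fst p) (snd p))"
    and t_incr: "\<forall>a ya v1 v2. 0 \<le> ya \<and> 0 \<le> v1 \<and> v1 < v2 \<longrightarrow> t a ya v1 < t a ya v2"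
    and G_nonneg: "\<forall>a x. 0 \<le> x \<longrightarrow> 0 \<le> G a x"
    and G_C1: "\<forall>a. C1_on {0..} (G a)"
    and G_incr: "\<forall>a. strict_mono_on {0..} (G a)"
    and G_convex: "\<forall>a. convex_on {0..} (G a)"
    and int_convex: "\<forall>a. convex_on {p. 0 \<le> fst p \<and> 0 \<le> snd p}
                            (\<lambda>p. integral {0..snd p} (\<lambda>w. t a (fst p) w))"
    and tv_convex: "\<forall>a. convex_on {p. 0 \<le> fst p \<and> 0 \<le> snd p}
                            (\<lambda>p. t a (fst p) (snd p) * snd p)"
    and eta: "\<eta> > 0"
    and g_convex: "convex_on (Yset u) (gg t (Vset Delta Lambda d))"
    and g_grad: "\<forall>y\<in>Yset u. (gg t (Vset Delta Lambda d) has_derivative (\<lambda>h. dg y \<bullet> h))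
                               (at y within Yset u)"
    and g_grad_cont: "continuous_on (Yset u) dg"
    and params: "\<epsilon>1 > 0" "\<epsilon>2 > 0" "\<epsilon>3 > 0" "0 < \<theta>l" "\<theta>l < \<theta>u" "\<rho>0 > 0" "\<sigma> > 1"
    and y0: "y0 \<in> Upsilon u \<tau>"
    and init: "ys 0 = y0" "vs 0 \<in> Vstar t (Vset Delta Lambda d) y0" "\<rho> 0 = \<rho>0"
              "\<theta>l / \<rho>0 \<le> \<beta> 0" "\<beta> 0 \<le> \<theta>u / \<rho>0"
    and iter: "\<forall>k. (\<forall>i<k. \<not> (norm (ys (Suc i) - ys i) \<le> \<epsilon>1 \<and> norm (vs (Suc i) - vs i) \<le> \<epsilon>2 \<and>
                    Phi t (Vset Delta Lambda d) dg (ys (Suc i)) (vs (Suc i)) (ys i) (vs i) \<le> \<epsilon>3))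
           \<longrightarrow> AMA_output (Psi t G \<eta> (Vset Delta Lambda d) dg (\<rho> k) (\<beta> k) (ys k) (vs k))
                 (Vset Delta Lambda d) (Upsilon u \<tau>) (ys k) (ys (Suc k), vs (Suc k))
             \<and> (\<not> (norm (ys (Suc k) - ys k) \<le> \<epsilon>1 \<and> norm (vs (Suc k) - vs k) \<le> \<epsilon>2 \<and>
                    Phi t (Vset Delta Lambda d) dg (ys (Suc k)) (vs (Suc k)) (ys k) (vs k) \<le> \<epsilon>3)
                \<longrightarrow> \<rho> (Suc k) = (if Phi t (Vset Delta Lambda d) dg (ys (Suc k)) (vs (Suc k)) (ys k) (vs k) > \<epsilon>3
                                  then \<sigma> * \<rho> k else \<rho> k)
                  \<and> \<theta>l / \<rho> (Suc k) \<le> \<beta> (Suc k) \<and> \<beta> (Suc k) \<le> \<theta>u / \<rho> (Suc k))"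
  shows "\<exists>k. norm (ys (Suc k) - ys k) \<le> \<epsilon>1 \<and> norm (vs (Suc k) - vs k) \<le> \<epsilon>2 \<and>
             Phi t (Vset Delta Lambda d) dg (ys (Suc k)) (vs (Suc k)) (ys k) (vs k) \<le> \<epsilon>3"
proof (rule ccontr)
  assume never_stops: "\<not> ?thesis"
  then have no_stop: "\<not> (norm (ys (Suc k) - ys k) \<le> \<epsilon>1 \<and> norm (vs (Suc k) - vs k) \<le> \<epsilon>2 \<and>
      Phi t (Vset Delta Lambda d) dg (ys (Suc k)) (vs (Suc k)) (ys k) (vs k) \<le> \<epsilon>3)" for k
    by blast
  note iter_k = iter[rule_format, OF no_stop]
  define V where "V = Vset Delta Lambda d"
  note AMA_descent = traffic_AMA_outputs_descent[OF Delta01 Lambda01 route_one_OD d_pos t_C1 G_C1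
      y0[folded init(1)] conjunct1[OF iter_k], folded V_def]
  note update = mp[OF conjunct2[OF iter_k] no_stop, folded V_def]
  have "vs 0 \<in> V" using init(2) by (simp add: Vstar_def V_def)
  interpret dc_penalty_problem "FF t G \<eta>" "ff t" "gg t V" dg "Yset u" V
    using traffic_dc_penalty_problem[OF Delta01 Lambda01 route_one_OD d_pos _ t_C1 G_C1 g_convex g_grad]
      \<open>vs 0 \<in> V\<close> by (auto simp: V_def)
  have Psi_eq: "Psi t G \<eta> V dg = penalty_obj"
    by (intro ext) (simp add: Psi_def Phi_def penalty_obj_def dc_gap_def)
  have Phi_eq: "Phi t V dg y v yb vb = dc_gap y v yb" for y v yb vb
    by (simp add: Phi_def dc_gap_def)
  interpret pdc_outer_loop "FF t G \<eta>" "ff t" "gg t V" dg "Yset u" V ys vs \<rho> \<beta> \<epsilon>1 \<epsilon>2 \<epsilon>3 \<theta>l \<theta>u \<sigma>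
  proof unfold_locales
    fix k
    show "ys k \<in> Yset u" using AMA_descent(1) Upsilon_subset_Yset by blast
    show "vs k \<in> V" using AMA_descent(2) \<open>vs 0 \<in> V\<close> by (cases k) auto
    show "\<theta>l / \<rho> k \<le> \<beta> k" "\<beta> k \<le> \<theta>u / \<rho> k"
      using init(3-5) update by (cases k; simp)+
  qed (use AMA_descent(3) update params in \<open>simp_all add: Psi_eq Phi_eq init(3)\<close>)
  show False
    using stopping_test_passes never_stops[folded V_def] by (auto simp: Phi_eq)
qed

end
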